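(* Let $n$ be a positive integer. The $V^{n}$-move and the $\overline{V}^{n}$-move are equivalent, i.e., each of them is realized by a sequence of the other move and welded Reidemeister moves.
   Context: A virtual link diagram is the image of an immersion of finitely many ordered, oriented circles in the plane with transverse double points, each a classical crossing (with over/under information) or a virtual crossing. Welded Reidemeister moves are R1–R3, the virtual moves VR1–VR3 (Reidemeister moves with all crossings virtual) and VR4 (a strand with only virtual crossings slides past a classical crossing), and the OC move (a strand passing over two strands at classical crossings may slide across a virtual crossing of those two strands). The $V^{n}$-move: inside a disk the diagram consists of two arcs $a,b$ oriented in the same direction; on one side they are parallel without crossings; on the other side (same endpoints) the tangle is the $2$-braid word $(\sigma\tau)^{n}$, where $\sigma$ is a classical crossing with $b$ over $a$ and $\tau$ a virtual crossing (so $n$ classical crossings, all with $b$ over, alternating with $n$ virtual crossings); the move replaces one side by the other. The $\overline{V}^{n}$-move is the same local move except that the two arcs $a,b$ are oriented antiparallel. *)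

theory Defs
  imports Main
begin

text \<open>
  Welded link diagrams are encoded by their Gauss diagrams (virtual link diagrams modulo
  the virtual moves VR1--VR4 are exactly Gauss diagrams, by Goussarov--Polyak--Viro /
  Kauffman).  A Gauss diagram of an ordered oriented link with k components is a list of k
  cyclic words (one per component, in order).  A letter is an endpoint
  (c, is_over, positive): the chord (classical crossing) name c, whether this is the
  over-crossing passage, and the sign of the crossing.
\<close>

type_synonym endpoint = "nat \<times> bool \<times> bool"
type_synonym gauss = "endpoint list list"

definition Ov :: "nat \<Rightarrow> bool \<Rightarrow> endpoint" where "Ov c s = (c, True, s)"
definition Ud :: "nat \<Rightarrow> bool \<Rightarrow> endpoint" where "Ud c s = (c, False, s)"

definition chords :: "gauss \<Rightarrow> nat set" where
  "chords D = {c. \<exists>w\<in>set D. \<exists>b s. (c, b, s) \<in> set w}"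

definition wf_gauss :: "gauss \<Rightarrow> bool" where
  "wf_gauss D \<longleftrightarrow> (\<forall>c\<in>chords D. \<exists>s.
      length (filter (\<lambda>e. fst e = c \<and> fst (snd e)) (concat D)) = 1 \<and>
      length (filter (\<lambda>e. fst e = c \<and> \<not> fst (snd e)) (concat D)) = 1 \<and>
      (\<forall>e\<in>set (concat D). fst e = c \<longrightarrow> snd (snd e) = s))"

text \<open>Diagram contexts: Gauss words with numbered holes (the complement of the disk of a
  local move); filling the holes with blocks gives a Gauss diagram.\<close>
datatype item = Pt endpoint | Hole nat

definition ctx_ok :: "item list list \<Rightarrow> nat \<Rightarrow> bool" where
  "ctx_ok C k \<longleftrightarrow> (\<forall>i. length (filter (\<lambda>x. x = Hole i) (concat C)) = (if i < k then 1 else 0))"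

definition fill :: "item list list \<Rightarrow> endpoint list list \<Rightarrow> gauss" where
  "fill C bs = map (\<lambda>w. concat (map (\<lambda>x. case x of Pt e \<Rightarrow> [e] | Hole i \<Rightarrow> bs ! i) w)) C"

definition local_move :: "endpoint list list \<Rightarrow> endpoint list list \<Rightarrow> gauss \<Rightarrow> gauss \<Rightarrow> bool" where
  "local_move L R D D' \<longleftrightarrow> length L = length R \<and>
     (\<exists>C. ctx_ok C (length L) \<and> D = fill C L \<and> D' = fill C R) \<and> wf_gauss D \<and> wf_gauss D'"

definition iso_step :: "gauss \<Rightarrow> gauss \<Rightarrow> bool" where
  "iso_step D D' \<longleftrightarrow> wf_gauss D \<and>
     ((\<exists>i < length D. D' = D[i := rotate1 (D ! i)]) \<or>
      (\<exists>f. inj f \<and> D' = map (map (\<lambda>(c, b, s). (f c, b, s))) D))"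

definition R1_step :: "gauss \<Rightarrow> gauss \<Rightarrow> bool" where
  "R1_step D D' \<longleftrightarrow> (\<exists>c s. local_move [[]] [[Ov c s, Ud c s]] D D' \<or>
                             local_move [[]] [[Ud c s, Ov c s]] D D')"

text \<open>R2: hole 0 is the over strand, hole 1 the under strand (parallel or antiparallel).\<close>
definition R2_step :: "gauss \<Rightarrow> gauss \<Rightarrow> bool" where
  "R2_step D D' \<longleftrightarrow> (\<exists>c1 c2 s.
      local_move [[], []] [[Ov c1 s, Ov c2 (\<not> s)], [Ud c1 s, Ud c2 (\<not> s)]] D D' \<or>
      local_move [[], []] [[Ov c1 s, Ov c2 (\<not> s)], [Ud c2 (\<not> s), Ud c1 s]] D D')"

text \<open>R3: strands T (top), M (middle), B (bottom); chords tm (T over M), tb (T over B),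
  mb (M over B).  oT: tm comes before tb on T; oM: tm before mb on M; oB: tb before mb on B.
  The admissible sign/order combinations are exactly those realised by three oriented
  straight lines forming a triangle; the move reverses the order on every strand.\<close>
definition R3_blocks :: "nat \<Rightarrow> nat \<Rightarrow> nat \<Rightarrow> bool \<Rightarrow> bool \<Rightarrow> bool \<Rightarrow> bool \<Rightarrow> bool \<Rightarrow> bool
    \<Rightarrow> endpoint list list" where
  "R3_blocks tm tb mb stm stb smb oT oM oB =
     [if oT then [Ov tm stm, Ov tb stb] else [Ov tb stb, Ov tm stm],
      if oM then [Ud tm stm, Ov mb smb] else [Ov mb smb, Ud tm stm],
      if oB then [Ud tb stb, Ud mb smb] else [Ud mb smb, Ud tb stb]]"

definition R3_step :: "gauss \<Rightarrow> gauss \<Rightarrow> bool" where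
  "R3_step D D' \<longleftrightarrow> (\<exists>tm tb mb stm stb smb oT oM oB.
      (stm \<noteq> stb \<longleftrightarrow> oM \<noteq> oB) \<and> (stm \<noteq> smb \<longleftrightarrow> oT \<noteq> oB) \<and>
      local_move (R3_blocks tm tb mb stm stb smb oT oM oB)
                 (R3_blocks tm tb mb stm stb smb (\<not> oT) (\<not> oM) (\<not> oB)) D D')"

definition OC_step :: "gauss \<Rightarrow> gauss \<Rightarrow> bool" where
  "OC_step D D' \<longleftrightarrow> (\<exists>c1 c2 s1 s2.
      local_move [[Ov c1 s1, Ov c2 s2]] [[Ov c2 s2, Ov c1 s1]] D D')"

definition welded_step :: "gauss \<Rightarrow> gauss \<Rightarrow> bool" where
  "welded_step D D' \<longleftrightarrow> iso_step D D' \<or> R1_step D D' \<or> R2_step D D' \<or> R3_step D D' \<or> OC_step D D'"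

text \<open>V^n-move: hole 0 is arc a (under), hole 1 arc b (over); the n classical crossings of
  (sigma tau)^n all have the same sign and occur in the same order on a and on b.
  For the antiparallel version the order on b is reversed.  The sign s is arbitrary
  (arcs a, b may be placed either way in the disk).\<close>
definition V_step :: "nat \<Rightarrow> gauss \<Rightarrow> gauss \<Rightarrow> bool" where
  "V_step n D D' \<longleftrightarrow> (\<exists>cs s. length cs = n \<and>
      local_move [[], []] [map (\<lambda>c. Ud c s) cs, map (\<lambda>c. Ov c s) cs] D D')"

definition Vbar_step :: "nat \<Rightarrow> gauss \<Rightarrow> gauss \<Rightarrow> bool" where
  "Vbar_step n D D' \<longleftrightarrow> (\<exists>cs s. length cs = n \<and>
      local_move [[], []] [map (\<lambda>c. Ud c s) cs, rev (map (\<lambda>c. Ov c s) cs)] D D')"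

text \<open>The move "replaces one side by the other", so both directions are allowed:
  the equivalence closure.\<close>
definition realizable_by :: "(gauss \<Rightarrow> gauss \<Rightarrow> bool) \<Rightarrow> (gauss \<Rightarrow> gauss \<Rightarrow> bool) \<Rightarrow> bool" where
  "realizable_by M N \<longleftrightarrow> (\<forall>D D'. M D D' \<longrightarrow> equivclp (\<lambda>X Y. welded_step X Y \<or> N X Y) D D')"

end

theory Submission
  imports Defs "HOL-Library.Multiset"
begin

text \<open>In the Gauss diagram model both moves insert n chords of one sign between the arcs a
  and b, with the under endpoints in the same order on a; they differ only in the order of
  the over endpoints on b, which is the same order for V^n and the reversed one for the
  antiparallel move.  The OC move exchanges adjacent over endpoints, so a chain of OC moves
  reverses the over endpoints on b.  Hence a move of either kind followed by such a chain
  realises the other one.\<close>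

lemma wf_gauss_mset_cong:
  assumes "mset (concat D) = mset (concat D')"
  shows "wf_gauss D \<longleftrightarrow> wf_gauss D'"
proof -
  have chords: "chords E = fst ` set (concat E)" for E
    unfolding chords_def by force
  have set: "set (concat D) = set (concat D')"
    by (metis assms set_mset_mset)
  have count: "length (filter P (concat D)) = length (filter P (concat D'))" for P
    by (metis assms mset_filter size_mset)
  show ?thesis
    unfolding wf_gauss_def chords set count ..
qed

lemma mset_concat_fill_cong:
  assumes "\<And>i. mset (bs ! i) = mset (bs' ! i)"
  shows "mset (concat (fill C bs)) = mset (concat (fill C bs'))"
proof -
  have "mset (concat (map (\<lambda>x. case x of Pt e \<Rightarrow> [e] | Hole i \<Rightarrow> bs ! i) w)) =
        mset (concat (map (\<lambda>x. case x of Pt e \<Rightarrow> [e] | Hole i \<Rightarrow> bs' ! i) w))" for w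
    by (induction w) (auto simp: assms split: item.splits)
  then show ?thesis
    unfolding fill_def by (induction C) auto
qed

lemma wf_gauss_fill_perm:
  assumes "wf_gauss (fill C [X, Y])" and "mset Y = mset Y'"
  shows "wf_gauss (fill C [X, Y'])"
proof -
  have "mset ([X, Y] ! i) = mset ([X, Y'] ! i)" for i
    using assms(2) by (cases i) (auto simp: nth_Cons')
  then show ?thesis
    using assms(1) wf_gauss_mset_cong mset_concat_fill_cong by metis
qed

lemma ctx_ok_hole_less:
  assumes "ctx_ok C k" and "Hole i \<in> set (concat C)"
  shows "i < k"
proof (rule ccontr)
  assume "\<not> i < k"
  with assms(1) have "length (filter (\<lambda>x. x = Hole i) (concat C)) = 0"
    unfolding ctx_ok_def by metis
  with assms(2) show False
    by (force simp: filter_empty_conv)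
qed

text \<open>Local moves act on whole holes; to apply one inside the block filling hole 1 of a
  context, the context is refocused on that sub-block.\<close>

definition focus_item :: "endpoint list \<Rightarrow> endpoint list \<Rightarrow> endpoint list \<Rightarrow> item \<Rightarrow> item list"
  where "focus_item X Y1 Y2 x = (case x of
      Pt e \<Rightarrow> [Pt e]
    | Hole 0 \<Rightarrow> map Pt X
    | Hole (Suc 0) \<Rightarrow> map Pt Y1 @ [Hole 0] @ map Pt Y2
    | Hole _ \<Rightarrow> [])"

definition focus_ctx :: "endpoint list \<Rightarrow> endpoint list \<Rightarrow> endpoint list \<Rightarrow> item list list \<Rightarrow> item list list"
  where "focus_ctx X Y1 Y2 C = map (\<lambda>w. concat (map (focus_item X Y1 Y2) w)) C"

lemma fill_focus_ctx:
  assumes "ctx_ok C 2"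
  shows "fill (focus_ctx X Y1 Y2 C) [Z] = fill C [X, Y1 @ Z @ Y2]"
proof -
  let ?fill1 = "\<lambda>x. case x of Pt e \<Rightarrow> [e] | Hole i \<Rightarrow> [Z] ! i"
  let ?fill2 = "\<lambda>x. case x of Pt e \<Rightarrow> [e] | Hole i \<Rightarrow> [X, Y1 @ Z @ Y2] ! i"
  have item: "concat (map ?fill1 (focus_item X Y1 Y2 x)) = ?fill2 x"
    if "x \<in> set (concat C)" for x
  proof (cases x)
    case (Hole i)
    with that have "i < 2"
      using ctx_ok_hole_less[OF assms] by blast
    then have "i = 0 \<or> i = 1" by auto
    with Hole show ?thesis by (auto simp: focus_item_def comp_def)
  qed (simp add: focus_item_def)
  have "set w \<subseteq> set (concat C) \<Longrightarrow>
      concat (map ?fill1 (concat (map (focus_item X Y1 Y2) w))) = concat (map ?fill2 w)" for w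
  proof (induction w)
    case (Cons x w)
    then show ?case using item[of x] by simp
  qed simp
  then show ?thesis
    unfolding fill_def focus_ctx_def by (simp add: map_eq_conv) blast
qed

lemma ctx_ok_focus_ctx:
  assumes "ctx_ok C 2"
  shows "ctx_ok (focus_ctx X Y1 Y2 C) 1"
proof -
  have item: "length (filter (\<lambda>x. x = Hole i) (focus_item X Y1 Y2 x)) =
      (if i = 0 \<and> x = Hole 1 then 1 else 0)" for x i
    by (auto simp: focus_item_def filter_empty_conv split: item.splits nat.splits)
  have "length (filter (\<lambda>x. x = Hole i) (concat (focus_ctx X Y1 Y2 C))) =
      (if i = 0 then length (filter (\<lambda>x. x = Hole 1) (concat C)) else 0)" for i
  proof -
    have "length (filter (\<lambda>x. x = Hole i) (concat (map (focus_item X Y1 Y2) w))) =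
        (if i = 0 then length (filter (\<lambda>x. x = Hole 1) w) else 0)" for w
      by (induction w) (auto simp: item)
    then show ?thesis
      unfolding focus_ctx_def by (induction C) auto
  qed
  with assms show ?thesis
    unfolding ctx_ok_def by simp
qed

lemma OC_step_in_second_hole:
  assumes "ctx_ok C 2" and "wf_gauss (fill C [X, Y1 @ [Ov c1 s1, Ov c2 s2] @ Y2])"
  shows "OC_step (fill C [X, Y1 @ [Ov c1 s1, Ov c2 s2] @ Y2])
                 (fill C [X, Y1 @ [Ov c2 s2, Ov c1 s1] @ Y2])"
proof -
  let ?C = "focus_ctx X Y1 Y2 C"
  have "ctx_ok ?C (length [[Ov c1 s1, Ov c2 s2]])"
    using ctx_ok_focus_ctx[OF assms(1)] by simp
  moreover have "wf_gauss (fill C [X, Y1 @ [Ov c2 s2, Ov c1 s1] @ Y2])"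
    using wf_gauss_fill_perm[OF assms(2)] by simp
  ultimately show ?thesis
    unfolding OC_step_def local_move_def
    using assms(2) fill_focus_ctx[OF assms(1)] by (intro exI conjI) auto
qed

abbreviation overs :: "bool \<Rightarrow> nat list \<Rightarrow> endpoint list"
  where "overs s cs \<equiv> map (\<lambda>c. Ov c s) cs"

lemma welded_rtranclp_over_to_front:
  assumes "ctx_ok C 2"
  shows "wf_gauss (fill C [X, Y1 @ overs s cs @ [Ov a s] @ Y2]) \<Longrightarrow>
    welded_step\<^sup>*\<^sup>* (fill C [X, Y1 @ overs s cs @ [Ov a s] @ Y2])
                     (fill C [X, Y1 @ [Ov a s] @ overs s cs @ Y2])"
proof (induction cs arbitrary: Y1)
  case (Cons c cs)
  have "welded_step\<^sup>*\<^sup>* (fill C [X, Y1 @ overs s (c # cs) @ [Ov a s] @ Y2])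
                         (fill C [X, Y1 @ [Ov c s, Ov a s] @ overs s cs @ Y2])"
    using Cons.IH[of "Y1 @ [Ov c s]"] Cons.prems by simp
  moreover have "wf_gauss (fill C [X, Y1 @ [Ov c s, Ov a s] @ overs s cs @ Y2])"
    using wf_gauss_fill_perm[OF Cons.prems] by simp
  then have "welded_step (fill C [X, Y1 @ [Ov c s, Ov a s] @ overs s cs @ Y2])
                         (fill C [X, Y1 @ [Ov a s, Ov c s] @ overs s cs @ Y2])"
    unfolding welded_step_def using OC_step_in_second_hole[OF assms] by blast
  ultimately show ?case by simp
qed simp

lemma welded_rtranclp_rev_overs:
  assumes "ctx_ok C 2"
  shows "wf_gauss (fill C [X, Y1 @ overs s (rev cs) @ Y2]) \<Longrightarrow>
    welded_step\<^sup>*\<^sup>* (fill C [X, Y1 @ overs s (rev cs) @ Y2]) (fill C [X, Y1 @ overs s cs @ Y2])"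
proof (induction cs arbitrary: Y1)
  case (Cons a cs)
  have "welded_step\<^sup>*\<^sup>* (fill C [X, Y1 @ overs s (rev (a # cs)) @ Y2])
                         (fill C [X, Y1 @ [Ov a s] @ overs s (rev cs) @ Y2])"
    using welded_rtranclp_over_to_front[OF assms, of X Y1 s "rev cs" a Y2] Cons.prems by simp
  moreover have "wf_gauss (fill C [X, (Y1 @ [Ov a s]) @ overs s (rev cs) @ Y2])"
    using wf_gauss_fill_perm[OF Cons.prems] by simp
  note Cons.IH[OF this]
  ultimately show ?case by simp
qed simp

lemma local_move_rev_overs:
  assumes "local_move [[], []] [U, overs s cs] D D'"
  shows "\<exists>D''. local_move [[], []] [U, overs s (rev cs)] D D'' \<and> welded_step\<^sup>*\<^sup>* D'' D'"
proof -
  from assms obtain C where C: "ctx_ok C 2" and D: "D = fill C [[], []]"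
    and D': "D' = fill C [U, overs s cs]" and "wf_gauss D" "wf_gauss D'"
    unfolding local_move_def by (auto simp: numeral_2_eq_2)
  let ?D'' = "fill C [U, overs s (rev cs)]"
  have "wf_gauss ?D''"
    using wf_gauss_fill_perm \<open>wf_gauss D'\<close> D' by (metis mset_map mset_rev)
  with C D \<open>wf_gauss D\<close> have "local_move [[], []] [U, overs s (rev cs)] D ?D''"
    unfolding local_move_def by (auto simp: numeral_2_eq_2)
  moreover have "welded_step\<^sup>*\<^sup>* ?D'' D'"
    using welded_rtranclp_rev_overs[OF C, of U "[]" s cs "[]"] \<open>wf_gauss ?D''\<close> D' by simp
  ultimately show ?thesis by blast
qed

lemma realizable_byI:
  assumes "\<And>D D'. M D D' \<Longrightarrow> \<exists>D''. N D D'' \<and> welded_step\<^sup>*\<^sup>* D'' D'"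
  shows "realizable_by M N"
  unfolding realizable_by_def
proof (intro allI impI)
  fix D D'
  assume "M D D'"
  then obtain D'' where "N D D''" and "welded_step\<^sup>*\<^sup>* D'' D'"
    using assms by blast
  then have "(\<lambda>X Y. welded_step X Y \<or> N X Y)\<^sup>*\<^sup>* D'' D'"
    using mono_rtranclp[of welded_step "\<lambda>X Y. welded_step X Y \<or> N X Y"] by blast
  with \<open>N D D''\<close> show "equivclp (\<lambda>X Y. welded_step X Y \<or> N X Y) D D'"
    by (blast intro: equivclp_trans rtranclp_into_equivclp)
qed

lemma V_step_realizable_by_Vbar_step: "realizable_by (V_step n) (Vbar_step n)"
proof (rule realizable_byI)
  fix D D'
  assume "V_step n D D'"
  then obtain cs s where "length cs = n"
    and move: "local_move [[], []] [map (\<lambda>c. Ud c s) cs, overs s cs] D D'"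
    unfolding V_step_def by blast
  moreover obtain D'' where "local_move [[], []] [map (\<lambda>c. Ud c s) cs, rev (overs s cs)] D D''"
    and "welded_step\<^sup>*\<^sup>* D'' D'"
    using local_move_rev_overs[OF move] by (auto simp: rev_map)
  ultimately show "\<exists>D''. Vbar_step n D D'' \<and> welded_step\<^sup>*\<^sup>* D'' D'"
    unfolding Vbar_step_def by blast
qed

lemma Vbar_step_realizable_by_V_step: "realizable_by (Vbar_step n) (V_step n)"
proof (rule realizable_byI)
  fix D D'
  assume "Vbar_step n D D'"
  then obtain cs s where "length cs = n"
    and move: "local_move [[], []] [map (\<lambda>c. Ud c s) cs, overs s (rev cs)] D D'"
    unfolding Vbar_step_def by (metis rev_map)
  moreover obtain D'' where "local_move [[], []] [map (\<lambda>c. Ud c s) cs, overs s cs] D D''"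
    and "welded_step\<^sup>*\<^sup>* D'' D'"
    using local_move_rev_overs[OF move] by auto
  ultimately show "\<exists>D''. V_step n D D'' \<and> welded_step\<^sup>*\<^sup>* D'' D'"
    unfolding V_step_def by blast
qed

theorem proposition7p6:
  fixes n :: nat
  assumes "n \<ge> 1"
  shows "realizable_by (V_step n) (Vbar_step n) \<and> realizable_by (Vbar_step n) (V_step n)"
  using V_step_realizable_by_Vbar_step Vbar_step_realizable_by_V_step by blast

end
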